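(* Let $\psi_0=1$, $\psi_j(x)=\sqrt2\cos(\pi jx)$ for $j\ge1$, let $\gamma>1/2$, $C>0$, and let $X$ have density $p=1+\sum_{j\ge1}\beta_j\psi_j\in\mathcal P(\gamma,C)$ on $[0,1]$. For $k\ge1$ let $m_k=\lfloor k^{1/(2\gamma+1)}\rfloor$, let $\Sigma_k$ be the covariance matrix of the random vector $(\psi_1(X),\dots,\psi_{m_k}(X))^T$, and let $\lambda_k$ be the largest eigenvalue of $\Sigma_k$. Then $\limsup_{k\to\infty}\lambda_k<\infty$.
   Context: Sobolev class: for $\gamma>1/2$, $C>0$, $\mathcal B(\gamma,C)=\{\beta=(\beta_1,\beta_2,\dots):\sum_{j\ge1}\beta_j^2j^{2\gamma}\le C^2\}$ and $\mathcal P(\gamma,C)=\{p=1+\sum_{j\ge1}\beta_j\psi_j:\beta\in\mathcal B(\gamma,C)\}$ (densities on $[0,1]$). *)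

theory Defs
  imports "HOL-Probability.Probability" "Jordan_Normal_Form.Char_Poly"
begin

definition cos_basis :: "nat \<Rightarrow> real \<Rightarrow> real" where
  "cos_basis j x = (if j = 0 then 1 else sqrt 2 * cos (pi * real j * x))"

text \<open>Sobolev ellipsoid B(gamma,C); the sequence beta_1, beta_2, ... is stored as
  beta 1, beta 2, ... (the value beta 0 is irrelevant).\<close>
definition sobolev_ball :: "real \<Rightarrow> real \<Rightarrow> (nat \<Rightarrow> real) set" where
  "sobolev_ball \<gamma> C = {\<beta>. summable (\<lambda>j. (\<beta> (Suc j))\<^sup>2 * real (Suc j) powr (2 * \<gamma>)) \<and>
      (\<Sum>j. (\<beta> (Suc j))\<^sup>2 * real (Suc j) powr (2 * \<gamma>)) \<le> C\<^sup>2}"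

definition cos_series :: "(nat \<Rightarrow> real) \<Rightarrow> real \<Rightarrow> real" where
  "cos_series \<beta> x = 1 + (\<Sum>j. \<beta> (Suc j) * cos_basis (Suc j) x)"

definition covariance :: "'a measure \<Rightarrow> ('a \<Rightarrow> real) \<Rightarrow> ('a \<Rightarrow> real) \<Rightarrow> real" where
  "covariance M f g =
     (LINT \<omega>|M. (f \<omega> - (LINT \<eta>|M. f \<eta>)) * (g \<omega> - (LINT \<eta>|M. g \<eta>)))"

text \<open>Covariance matrix of (psi_1(X), ..., psi_m(X)); row/column index i stands for psi_(i+1).\<close>
definition cos_cov_mat :: "'a measure \<Rightarrow> ('a \<Rightarrow> real) \<Rightarrow> nat \<Rightarrow> real mat" where
  "cos_cov_mat M X m = mat m m (\<lambda>(i, l).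
      covariance M (\<lambda>\<omega>. cos_basis (Suc i) (X \<omega>)) (\<lambda>\<omega>. cos_basis (Suc l) (X \<omega>)))"

definition largest_eigenvalue :: "real mat \<Rightarrow> real" where
  "largest_eigenvalue A = Max {e. eigenvalue A e}"

end

theory Submission
  imports Defs
begin

(* Write g = sum_(i<m) v_i psi_(i+1) for a vector v.  The quadratic form of the covariance
   matrix Sigma_m of (psi_1(X), ..., psi_m(X)) is the variance of g(X), hence at most
   E[g(X)^2] = int_0^1 p g^2 <= (sup p) int_0^1 g^2 = (sup p) |v|^2, the last step by
   orthonormality of the cosine basis (Parseval).  So every eigenvalue of Sigma_m is at most
   sup p, for every m, regardless of the choice of m_k.  Finally sup p is finite: Sobolev
   coefficients with gamma > 1/2 are absolutely summable and |psi_j| <= sqrt 2. *)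

lemma cos_basis_abs_le: "\<bar>cos_basis j x\<bar> \<le> sqrt 2"
proof -
  have "sqrt 2 * \<bar>cos (pi * real j * x)\<bar> \<le> sqrt 2"
    using abs_cos_le_one by simp
  moreover have "(1::real) \<le> sqrt 2" by simp
  ultimately show ?thesis by (auto simp: cos_basis_def abs_mult)
qed

lemma cos_basis_continuous [continuous_intros]: "continuous_on S (cos_basis j)"
  unfolding cos_basis_def by (cases "j = 0") (auto intro!: continuous_intros)

lemma cos_basis_measurable [measurable]: "cos_basis j \<in> borel_measurable borel"
  by (intro borel_measurable_continuous_onI cos_basis_continuous)

(* If the squares b_j^2 are summable against weights w_j whose reciprocals are summable,
   then b is absolutely summable: 2|b_j| <= b_j^2 w_j + 1/w_j, since (|b_j| w_j - 1)^2 >= 0. *)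
lemma summable_abs_of_weighted_squares:
  fixes b w :: "nat \<Rightarrow> real"
  assumes w_pos: "\<And>j. w j > 0"
    and sum_sq: "summable (\<lambda>j. (b j)\<^sup>2 * w j)" and sum_inv: "summable (\<lambda>j. 1 / w j)"
  shows "summable (\<lambda>j. \<bar>b j\<bar>)"
proof (rule summable_comparison_test)
  have "2 * \<bar>b j\<bar> \<le> (b j)\<^sup>2 * w j + 1 / w j" for j
  proof -
    have "0 \<le> (\<bar>b j\<bar> * w j - 1)\<^sup>2" by simp
    then have "2 * \<bar>b j\<bar> * w j \<le> ((b j)\<^sup>2 * w j + 1 / w j) * w j"
      using w_pos[of j] by (simp add: power2_diff power2_eq_square algebra_simps)
    then show ?thesis using w_pos[of j] by simp
  qed
  then show "\<exists>N. \<forall>j\<ge>N. norm \<bar>b j\<bar> \<le> ((b j)\<^sup>2 * w j + 1 / w j) / 2"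
    by (auto simp: mult.commute)
  show "summable (\<lambda>j. ((b j)\<^sup>2 * w j + 1 / w j) / 2)"
    using sum_sq sum_inv by (intro summable_divide summable_add)
qed

(* For gamma > 1/2 the weights j^(2 gamma) have summable reciprocals, so Sobolev
   coefficients are absolutely summable. *)
lemma sobolev_ball_abs_summable:
  assumes \<gamma>: "\<gamma> > 1/2" and \<beta>: "\<beta> \<in> sobolev_ball \<gamma> C"
  shows "summable (\<lambda>j. \<bar>\<beta> (Suc j)\<bar>)"
proof (rule summable_abs_of_weighted_squares)
  show "summable (\<lambda>j. (\<beta> (Suc j))\<^sup>2 * real (Suc j) powr (2 * \<gamma>))"
    using \<beta> by (simp add: sobolev_ball_def)
  have "summable (\<lambda>n. real n powr (- 2 * \<gamma>))"
    using \<gamma> by (subst summable_real_powr_iff) simp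
  then have "summable (\<lambda>j. real (Suc j) powr (- 2 * \<gamma>))"
    by (subst summable_Suc_iff)
  then show "summable (\<lambda>j. 1 / real (Suc j) powr (2 * \<gamma>))"
    by (simp add: powr_minus divide_inverse)
qed simp

lemma cos_series_measurable [measurable]: "cos_series \<beta> \<in> borel_measurable borel"
  unfolding cos_series_def by measurable

lemma cos_series_abs_le:
  assumes abs_sum: "summable (\<lambda>j. \<bar>\<beta> (Suc j)\<bar>)"
  shows "\<bar>cos_series \<beta> x\<bar> \<le> 1 + sqrt 2 * (\<Sum>j. \<bar>\<beta> (Suc j)\<bar>)"
proof -
  have term_le: "\<bar>\<beta> (Suc j) * cos_basis (Suc j) x\<bar> \<le> sqrt 2 * \<bar>\<beta> (Suc j)\<bar>" for j
    using cos_basis_abs_le[of "Suc j" x] by (simp add: abs_mult mult.commute mult_left_mono)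
  have majorant: "summable (\<lambda>j. sqrt 2 * \<bar>\<beta> (Suc j)\<bar>)"
    using abs_sum by (rule summable_mult)
  have abs_terms: "summable (\<lambda>j. \<bar>\<beta> (Suc j) * cos_basis (Suc j) x\<bar>)"
    by (rule summable_comparison_test[OF _ majorant]) (use term_le in auto)
  have "\<bar>\<Sum>j. \<beta> (Suc j) * cos_basis (Suc j) x\<bar> \<le> (\<Sum>j. \<bar>\<beta> (Suc j) * cos_basis (Suc j) x\<bar>)"
    by (rule summable_rabs[OF abs_terms])
  also have "\<dots> \<le> (\<Sum>j. sqrt 2 * \<bar>\<beta> (Suc j)\<bar>)"
    by (rule suminf_le[OF term_le abs_terms majorant])
  also have "\<dots> = sqrt 2 * (\<Sum>j. \<bar>\<beta> (Suc j)\<bar>)"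
    using suminf_mult[OF abs_sum] by simp
  finally show ?thesis
    unfolding cos_series_def by linarith
qed

lemma integral_unit_interval_cos_int:
  fixes k :: int
  shows "(LINT x|lborel. indicator {0..1} x * cos (pi * of_int k * x)) = (if k = 0 then 1 else 0)"
proof (cases "k = 0")
  case True
  then show ?thesis
    using measure_lborel_Icc[of "0::real" 1] by simp
next
  case False
  then have k: "pi * of_int k \<noteq> 0" by simp
  have "(LINT x|lborel. indicator {0..1} x *\<^sub>R cos (pi * of_int k * x))
        = sin (pi * of_int k * 1) / (pi * of_int k) - sin (pi * of_int k * 0) / (pi * of_int k)"
  proof (rule integral_FTC_atLeastAtMost[where F = "\<lambda>x. sin (pi * of_int k * x) / (pi * of_int k)"])
    fix x :: real
    show "((\<lambda>x. sin (pi * of_int k * x) / (pi * of_int k)) has_vector_derivative cos (pi * of_int k * x))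
            (at x within {0..1})"
      unfolding has_real_derivative_iff_has_vector_derivative[symmetric]
      using k by (auto intro!: derivative_eq_intros)
  qed (auto intro!: continuous_intros)
  moreover have "sin (pi * of_int k) = 0"
    by (metis mult.commute sin_times_pi_eq_0 Ints_of_int)
  ultimately show ?thesis using False by simp
qed

lemma cos_basis_Suc_product:
  "cos_basis (Suc i) x * cos_basis (Suc l) x =
     cos (pi * of_int (int i - int l) * x) + cos (pi * of_int (int i + int l + 2) * x)"
proof -
  define a where "a = pi * real (Suc i) * x"
  define b where "b = pi * real (Suc l) * x"
  have "cos_basis (Suc i) x * cos_basis (Suc l) x = 2 * cos a * cos b"
    unfolding cos_basis_def a_def b_def by simp
  also have "\<dots> = cos (a - b) + cos (a + b)"
    by (simp add: cos_add cos_diff)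
  moreover have "a - b = pi * of_int (int i - int l) * x" "a + b = pi * of_int (int i + int l + 2) * x"
    unfolding a_def b_def by (simp_all add: algebra_simps)
  ultimately show ?thesis by simp
qed

lemma integrable_unit_interval_continuous:
  fixes f :: "real \<Rightarrow> real"
  assumes "continuous_on {0..1} f"
  shows "integrable lborel (\<lambda>x. indicator {0..1} x * f x)"
  using borel_integrable_atLeastAtMost'[OF assms] by (simp add: set_integrable_def)

lemma cos_basis_orthonormal:
  "(LINT x|lborel. indicator {0..1} x * (cos_basis (Suc i) x * cos_basis (Suc l) x))
     = (if i = l then 1 else 0)"
proof -
  have int: "integrable lborel (\<lambda>x. indicator {0..1} x * cos (pi * of_int k * x))" for k :: int
    by (intro integrable_unit_interval_continuous continuous_intros)
  have "(LINT x|lborel. indicator {0..1} x * (cos_basis (Suc i) x * cos_basis (Suc l) x))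
     = (LINT x|lborel. indicator {0..1} x * cos (pi * of_int (int i - int l) * x)
          + indicator {0..1} x * cos (pi * of_int (int i + int l + 2) * x))"
    by (simp add: cos_basis_Suc_product distrib_left)
  also have "\<dots> = (if i = l then 1 else 0)"
    by (simp only: Bochner_Integration.integral_add[OF int int] integral_unit_interval_cos_int) simp
  finally show ?thesis .
qed

lemma cos_polynomial_parseval:
  "(LINT x|lborel. indicator {0..1} x * (\<Sum>i<m. c i * cos_basis (Suc i) x)\<^sup>2) = (\<Sum>i<m. (c i)\<^sup>2)"
proof -
  have int: "integrable lborel (\<lambda>x. indicator {0..1} x * (cos_basis (Suc i) x * cos_basis (Suc l) x))"
    for i l by (intro integrable_unit_interval_continuous continuous_intros)
  have "(\<lambda>x. indicator {0..1} x * (\<Sum>i<m. c i * cos_basis (Suc i) x)\<^sup>2)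
      = (\<lambda>x. \<Sum>i<m. \<Sum>l<m. c i * c l * (indicator {0..1} x * (cos_basis (Suc i) x * cos_basis (Suc l) x)))"
    by (simp add: power2_eq_square sum_product sum_distrib_left mult_ac)
  then have "(LINT x|lborel. indicator {0..1} x * (\<Sum>i<m. c i * cos_basis (Suc i) x)\<^sup>2)
      = (\<Sum>i<m. \<Sum>l<m. c i * c l * (if i = l then 1 else 0))"
    by (simp add: int cos_basis_orthonormal)
  also have "\<dots> = (\<Sum>i<m. (c i)\<^sup>2)"
    by (simp add: power2_eq_square if_distrib sum.delta cong: if_cong)
  finally show ?thesis .
qed

lemma second_moment_le_density_bound:
  fixes X :: "'a \<Rightarrow> real" and p g :: "real \<Rightarrow> real"
  assumes distr: "distributed M lborel X (\<lambda>x. ennreal (indicator {0..1} x * p x))"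
    and p_nonneg: "\<And>x. x \<in> {0..1} \<Longrightarrow> 0 \<le> p x"
    and p_le: "\<And>x. x \<in> {0..1} \<Longrightarrow> p x \<le> P"
    and p_meas [measurable]: "p \<in> borel_measurable borel"
    and g_cont: "continuous_on {0..1} g" and g_meas [measurable]: "g \<in> borel_measurable borel"
  shows "(LINT \<omega>|M. (g (X \<omega>))\<^sup>2) \<le> P * (LINT x|lborel. indicator {0..1} x * (g x)\<^sup>2)"
proof -
  define q where "q x = indicator {0..1} x * (g x)\<^sup>2" for x :: real
  have q_int: "integrable lborel (\<lambda>x. P * q x)"
    unfolding q_def by (intro integrable_mult_right integrable_unit_interval_continuous
      continuous_intros g_cont)
  have pointwise: "\<bar>indicator {0..1} x * p x * (g x)\<^sup>2\<bar> \<le> P * q x" for x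
    using p_nonneg[of x] p_le[of x] unfolding q_def
    by (auto simp: indicator_def abs_mult intro!: mult_right_mono)
  have "(LINT \<omega>|M. (g (X \<omega>))\<^sup>2) = (LINT x|lborel. indicator {0..1} x * p x * (g x)\<^sup>2)"
    by (rule distributed_integral[OF distr, symmetric]) (auto simp: indicator_def p_nonneg)
  also have "\<dots> \<le> (LINT x|lborel. P * q x)"
  proof (rule integral_mono[OF _ q_int order_trans[OF abs_ge_self pointwise]])
    show "integrable lborel (\<lambda>x. indicator {0..1} x * p x * (g x)\<^sup>2)"
      by (rule Bochner_Integration.integrable_bound[OF q_int])
         (use pointwise in \<open>auto intro: order_trans[OF _ abs_ge_self]\<close>)
  qed
  also have "\<dots> = P * (LINT x|lborel. indicator {0..1} x * (g x)\<^sup>2)"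
    unfolding q_def by simp
  finally show ?thesis .
qed

lemma (in prob_space) integrable_bounded_real:
  fixes f :: "'a \<Rightarrow> real"
  assumes "f \<in> borel_measurable M" and "\<And>\<omega>. \<bar>f \<omega>\<bar> \<le> K"
  shows "integrable M f"
  using assms by (intro integrable_const_bound[where B = K]) auto

lemma (in prob_space) covariance_quadratic_form:
  fixes f :: "nat \<Rightarrow> 'a \<Rightarrow> real"
  assumes meas: "\<And>i. f i \<in> borel_measurable M" and bnd: "\<And>i \<omega>. \<bar>f i \<omega>\<bar> \<le> K"
  shows "(\<Sum>i<m. \<Sum>l<m. v i * v l * covariance M (f i) (f l))
           = variance (\<lambda>\<omega>. \<Sum>i<m. v i * f i \<omega>)"
proof -
  define c where "c i \<omega> = f i \<omega> - expectation (f i)" for i \<omega>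
  have c_bnd: "\<bar>c i \<omega>\<bar> \<le> K + \<bar>expectation (f i)\<bar>" for i \<omega>
    using bnd[of i \<omega>] unfolding c_def by linarith
  have c_meas[measurable]: "c i \<in> borel_measurable M" for i
    unfolding c_def using meas by measurable
  have cc_int: "integrable M (\<lambda>\<omega>. x * c i \<omega> * (y * c l \<omega>))" for x y i l
  proof (rule integrable_bounded_real)
    fix \<omega>
    have "\<bar>c i \<omega>\<bar> * \<bar>c l \<omega>\<bar> \<le> (K + \<bar>expectation (f i)\<bar>) * (K + \<bar>expectation (f l)\<bar>)"
      using c_bnd by (intro mult_mono) (auto intro: order_trans[OF abs_ge_zero])
    then show "\<bar>x * c i \<omega> * (y * c l \<omega>)\<bar>
        \<le> \<bar>x\<bar> * \<bar>y\<bar> * ((K + \<bar>expectation (f i)\<bar>) * (K + \<bar>expectation (f l)\<bar>))"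
      by (simp add: abs_mult mult_left_mono mult.assoc mult.left_commute)
  qed measurable
  have f_int: "integrable M (f i)" for i
    using meas bnd by (rule integrable_bounded_real)
  have centred: "(\<Sum>i<m. v i * c i \<omega>)
      = (\<Sum>i<m. v i * f i \<omega>) - expectation (\<lambda>\<omega>. \<Sum>i<m. v i * f i \<omega>)" for \<omega>
    by (simp add: c_def f_int algebra_simps sum_subtractf)
  have "(\<Sum>i<m. \<Sum>l<m. v i * v l * covariance M (f i) (f l))
      = (\<Sum>i<m. \<Sum>l<m. expectation (\<lambda>\<omega>. v i * c i \<omega> * (v l * c l \<omega>)))"
    by (simp add: covariance_def c_def mult.assoc mult.left_commute)
  also have "\<dots> = expectation (\<lambda>\<omega>. (\<Sum>i<m. v i * c i \<omega>)\<^sup>2)"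
    by (simp add: power2_eq_square sum_product cc_int)
  finally show ?thesis
    by (simp only: centred)
qed

lemma (in prob_space) variance_le_second_moment:
  fixes Y :: "'a \<Rightarrow> real"
  assumes "integrable M Y" and "integrable M (\<lambda>\<omega>. (Y \<omega>)\<^sup>2)"
  shows "variance Y \<le> expectation (\<lambda>\<omega>. (Y \<omega>)\<^sup>2)"
  using variance_eq[OF assms] by simp

lemma scalar_prod_self_pos:
  fixes v :: "real vec"
  assumes "v \<in> carrier_vec m" and "v \<noteq> 0\<^sub>v m"
  shows "0 < v \<bullet> v"
proof -
  obtain i where i: "i < m" "v $ i \<noteq> 0"
    using assms by (auto simp: vec_eq_iff)
  have "0 < v $ i * v $ i" using i(2) by (auto simp: zero_less_mult_iff linorder_neq_iff)
  also have "\<dots> \<le> (\<Sum>j\<in>{0..<m}. v $ j * v $ j)"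
    using i by (intro member_le_sum) auto
  finally show ?thesis
    using assms(1) by (simp add: scalar_prod_def)
qed

(* Rayleigh bound: if v^T A v <= P |v|^2 for all v, every real eigenvalue of A is at most P
   (evaluate the form at an eigenvector). *)
lemma eigenvalue_le_of_quadratic_form_bound:
  fixes A :: "real mat"
  assumes A: "A \<in> carrier_mat m m"
    and form_le: "\<And>v. v \<in> carrier_vec m \<Longrightarrow> v \<bullet> (A *\<^sub>v v) \<le> P * (v \<bullet> v)"
    and eig: "eigenvalue A e"
  shows "e \<le> P"
proof -
  obtain v where v: "v \<in> carrier_vec m" "v \<noteq> 0\<^sub>v m" "A *\<^sub>v v = e \<cdot>\<^sub>v v"
    using eig A unfolding eigenvalue_def eigenvector_def by auto
  have "e * (v \<bullet> v) \<le> P * (v \<bullet> v)"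
    using form_le[OF v(1)] v(1,3) by simp
  then show ?thesis
    using scalar_prod_self_pos[OF v(1,2)] by simp
qed

(* A bound for Max of an arbitrary set of reals; when the set is empty or infinite, Max
   degenerates to the unspecified value Max {}, which is included in the bound. *)
lemma Max_le_max_Max_empty:
  fixes S :: "real set"
  assumes "\<And>e. e \<in> S \<Longrightarrow> e \<le> B"
  shows "Max S \<le> max B (Max {})"
proof (cases "finite S \<and> S \<noteq> {}")
  case True
  then show ?thesis using assms by (auto simp: Max_le_iff le_max_iff_disj)
next
  case False
  then have "Max S = Max {}"
    by (auto simp: Max.eq_fold' fold_infinite)
  then show ?thesis by simp
qed

lemma cos_cov_mat_carrier: "cos_cov_mat M X m \<in> carrier_mat m m"
  by (simp add: cos_cov_mat_def)

lemma cos_cov_mat_quadratic_form: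
  assumes "v \<in> carrier_vec m"
  shows "v \<bullet> (cos_cov_mat M X m *\<^sub>v v) = (\<Sum>i<m. \<Sum>l<m. v $ i * v $ l *
            covariance M (\<lambda>\<omega>. cos_basis (Suc i) (X \<omega>)) (\<lambda>\<omega>. cos_basis (Suc l) (X \<omega>)))"
  using assms by (simp add: cos_cov_mat_def scalar_prod_def lessThan_atLeast0 sum_distrib_left mult_ac)

lemma cos_cov_mat_eigenvalue_le:
  fixes X :: "'a \<Rightarrow> real" and p :: "real \<Rightarrow> real"
  assumes "prob_space M"
    and distr: "distributed M lborel X (\<lambda>x. ennreal (indicator {0..1} x * p x))"
    and p_nonneg: "\<And>x. x \<in> {0..1} \<Longrightarrow> 0 \<le> p x"
    and p_le: "\<And>x. x \<in> {0..1} \<Longrightarrow> p x \<le> P"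
    and p_meas: "p \<in> borel_measurable borel"
    and eig: "eigenvalue (cos_cov_mat M X m) e"
  shows "e \<le> P"
proof -
  interpret prob_space M by fact
  have X_meas [measurable]: "X \<in> borel_measurable M"
    using distributed_measurable[OF distr] by simp
  show ?thesis
  proof (rule eigenvalue_le_of_quadratic_form_bound[OF cos_cov_mat_carrier _ eig])
    fix v :: "real vec" assume v: "v \<in> carrier_vec m"
    define g where "g x = (\<Sum>i<m. v $ i * cos_basis (Suc i) x)" for x
    have g_meas [measurable]: "g \<in> borel_measurable borel"
      unfolding g_def by measurable
    have g_cont: "continuous_on {0..1} g"
      unfolding g_def by (intro continuous_intros)
    define K where "K = (\<Sum>i<m. \<bar>v $ i\<bar> * sqrt 2)"
    have g_bnd: "\<bar>g x\<bar> \<le> K" for x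
      unfolding g_def K_def
      by (rule order_trans[OF sum_abs sum_mono]) (simp add: abs_mult cos_basis_abs_le mult_left_mono)
    have "v \<bullet> (cos_cov_mat M X m *\<^sub>v v) = variance (\<lambda>\<omega>. g (X \<omega>))"
      unfolding cos_cov_mat_quadratic_form[OF v] g_def
      by (rule covariance_quadratic_form[where K = "sqrt 2"]) (auto simp: cos_basis_abs_le)
    also have "\<dots> \<le> expectation (\<lambda>\<omega>. (g (X \<omega>))\<^sup>2)"
    proof (rule variance_le_second_moment)
      show "integrable M (\<lambda>\<omega>. g (X \<omega>))"
        using g_bnd by (intro integrable_bounded_real) auto
      have "\<bar>(g x)\<^sup>2\<bar> \<le> K\<^sup>2" for x
        using g_bnd[of x] by (simp add: abs_le_square_iff power2_le_iff_abs_le order_trans[OF abs_ge_zero])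
      then show "integrable M (\<lambda>\<omega>. (g (X \<omega>))\<^sup>2)"
        by (intro integrable_bounded_real) auto
    qed
    also have "\<dots> \<le> P * (LINT x|lborel. indicator {0..1} x * (g x)\<^sup>2)"
      by (rule second_moment_le_density_bound[OF distr p_nonneg p_le p_meas g_cont g_meas])
    also have "\<dots> = P * (v \<bullet> v)"
      using v unfolding g_def cos_polynomial_parseval
      by (simp add: scalar_prod_def lessThan_atLeast0 power2_eq_square)
    finally show "v \<bullet> (cos_cov_mat M X m *\<^sub>v v) \<le> P * (v \<bullet> v)" .
  qed
qed

theorem mainTheorem14:
  fixes M :: "'a measure" and X :: "'a \<Rightarrow> real" and \<beta> :: "nat \<Rightarrow> real"
    and \<gamma> C :: real
  assumes "prob_space M"
    and "\<gamma> > 1/2" and "C > 0"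
    and "\<beta> \<in> sobolev_ball \<gamma> C"
    and "\<forall>x\<in>{0..1}. cos_series \<beta> x \<ge> 0"
    and "distributed M lborel X (\<lambda>x. ennreal (indicator {0..1} x * cos_series \<beta> x))"
  shows "limsup (\<lambda>k. ereal (largest_eigenvalue
            (cos_cov_mat M X (nat \<lfloor>real (Suc k) powr (1 / (2 * \<gamma> + 1))\<rfloor>)))) < \<infinity>"
proof -
  define P where "P = 1 + sqrt 2 * (\<Sum>j. \<bar>\<beta> (Suc j)\<bar>)"
  have density_le: "cos_series \<beta> x \<le> P" for x
    using cos_series_abs_le[OF sobolev_ball_abs_summable[OF assms(2,4)], of x]
    unfolding P_def by linarith
  have eigenvalue_le: "e \<le> P" if "eigenvalue (cos_cov_mat M X m) e" for m e
    using cos_cov_mat_eigenvalue_le[OF assms(1,6) _ density_le cos_series_measurable that] assms(5)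
    by blast
  define B where "B = max P (Max {})"
  have "largest_eigenvalue (cos_cov_mat M X m) \<le> B" for m
    unfolding largest_eigenvalue_def B_def using eigenvalue_le by (intro Max_le_max_Max_empty) blast
  then have "limsup (\<lambda>k. ereal (largest_eigenvalue
            (cos_cov_mat M X (nat \<lfloor>real (Suc k) powr (1 / (2 * \<gamma> + 1))\<rfloor>)))) \<le> ereal B"
    by (intro Limsup_bounded) simp
  also have "\<dots> < \<infinity>" by simp
  finally show ?thesis .
qed

end
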